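(* Let $\mathfrak g$ be a finite-dimensional two-step solvable Lie algebra over a field $k$ of characteristic zero which is generated as a Lie algebra by two elements. Then $\mathfrak g$ admits a complete LR-structure.
   Context: Two-step solvable means $[[\mathfrak g,\mathfrak g],[\mathfrak g,\mathfrak g]]=0$. An LR-structure on a Lie algebra $\mathfrak g$ is a bilinear product $\cdot$ on its underlying space with $x\cdot(y\cdot z)=y\cdot(x\cdot z)$, $(x\cdot y)\cdot z=(x\cdot z)\cdot y$ and $x\cdot y-y\cdot x=[x,y]$ for all $x,y,z$; it is complete if all right multiplications $R(x)\colon y\mapsto y\cdot x$ are nilpotent. *)

theory Defs
  imports Complex_Main
begin

definition bilinear_map :: "('k::field \<Rightarrow> 'v::ab_group_add \<Rightarrow> 'v) \<Rightarrow> ('v \<Rightarrow> 'v \<Rightarrow> 'v) \<Rightarrow> bool" where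
  "bilinear_map sc f \<longleftrightarrow>
     (\<forall>x. Vector_Spaces.linear sc sc (f x)) \<and> (\<forall>y. Vector_Spaces.linear sc sc (\<lambda>x. f x y))"

definition lie_algebra :: "('k::field \<Rightarrow> 'v::ab_group_add \<Rightarrow> 'v) \<Rightarrow> ('v \<Rightarrow> 'v \<Rightarrow> 'v) \<Rightarrow> bool" where
  "lie_algebra sc br \<longleftrightarrow> vector_space sc \<and> bilinear_map sc br \<and>
     (\<forall>x. br x x = 0) \<and>
     (\<forall>x y z. br x (br y z) + br y (br z x) + br z (br x y) = 0)"

definition finite_dim :: "('k::field \<Rightarrow> 'v::ab_group_add \<Rightarrow> 'v) \<Rightarrow> bool" where
  "finite_dim sc \<longleftrightarrow> (\<exists>B. finite B \<and> module.span sc B = UNIV)"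

definition derived :: "('k::field \<Rightarrow> 'v::ab_group_add \<Rightarrow> 'v) \<Rightarrow> ('v \<Rightarrow> 'v \<Rightarrow> 'v) \<Rightarrow> 'v set" where
  "derived sc br = module.span sc {br x y | x y. True}"

definition two_step_solvable :: "('k::field \<Rightarrow> 'v::ab_group_add \<Rightarrow> 'v) \<Rightarrow> ('v \<Rightarrow> 'v \<Rightarrow> 'v) \<Rightarrow> bool" where
  "two_step_solvable sc br \<longleftrightarrow> (\<forall>x\<in>derived sc br. \<forall>y\<in>derived sc br. br x y = 0)"

definition lie_subalgebra :: "('k::field \<Rightarrow> 'v::ab_group_add \<Rightarrow> 'v) \<Rightarrow> ('v \<Rightarrow> 'v \<Rightarrow> 'v) \<Rightarrow> 'v set \<Rightarrow> bool" where
  "lie_subalgebra sc br S \<longleftrightarrow> module.subspace sc S \<and> (\<forall>x\<in>S. \<forall>y\<in>S. br x y \<in> S)"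

definition generated_subalgebra :: "('k::field \<Rightarrow> 'v::ab_group_add \<Rightarrow> 'v) \<Rightarrow> ('v \<Rightarrow> 'v \<Rightarrow> 'v) \<Rightarrow> 'v set \<Rightarrow> 'v set" where
  "generated_subalgebra sc br A = \<Inter>{S. lie_subalgebra sc br S \<and> A \<subseteq> S}"

definition LR_structure :: "('k::field \<Rightarrow> 'v::ab_group_add \<Rightarrow> 'v) \<Rightarrow> ('v \<Rightarrow> 'v \<Rightarrow> 'v) \<Rightarrow> ('v \<Rightarrow> 'v \<Rightarrow> 'v) \<Rightarrow> bool" where
  "LR_structure sc br p \<longleftrightarrow> bilinear_map sc p \<and>
     (\<forall>x y z. p x (p y z) = p y (p x z)) \<and>
     (\<forall>x y z. p (p x y) z = p (p x z) y) \<and>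
     (\<forall>x y. p x y - p y x = br x y)"

definition complete_LR_structure :: "('k::field \<Rightarrow> 'v::ab_group_add \<Rightarrow> 'v) \<Rightarrow> ('v \<Rightarrow> 'v \<Rightarrow> 'v) \<Rightarrow> ('v \<Rightarrow> 'v \<Rightarrow> 'v) \<Rightarrow> bool" where
  "complete_LR_structure sc br p \<longleftrightarrow> LR_structure sc br p \<and>
     (\<forall>x. \<exists>n. ((\<lambda>y. p y x) ^^ n) = (\<lambda>_. 0))"

end

theory Submission
  imports Defs
begin

text \<open>Theorem: a finite-dimensional two-step solvable Lie algebra g generated by two elements a, b
  admits a complete LR-structure.

  Let c = [a, b] and let N be the submodule generated by c under the operators ad a and ad b.
  Because [[g,g],[g,g]] = 0, ad a and ad b commute on [g,g]; so N is an abelian ideal with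
  g = span {a, b} + N, and N is a cyclic module over two commuting operators, which makes it a
  commutative associative algebra with unit c (locale commuting_operators).  The Fitting
  decomposition of ad b on N (locale fitting_decomposition) splits N into a part where ad b is
  invertible and a part where it is nilpotent.
  If a and b are linearly independent modulo N, an explicit product built from these data is a
  complete LR-structure (locale two_generated_nondegenerate).  Otherwise g = k x0 + N and the
  product x . y = t(x) [x0, y] (locale codim_one_abelian_ideal), or the zero product when g = N,
  does the job.\<close>

locale lie_bracket = vector_space sc
  for sc :: "'k::field \<Rightarrow> 'v::ab_group_add \<Rightarrow> 'v" +
  fixes br :: "'v \<Rightarrow> 'v \<Rightarrow> 'v"
  assumes br_add_right: "br x (y + z) = br x y + br x z"
    and br_add_left: "br (x + y) z = br x z + br y z"
    and br_scale_right: "br x (sc r y) = sc r (br x y)"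
    and br_scale_left: "br (sc r x) y = sc r (br x y)"
    and br_self: "br x x = 0"
    and jacobi: "br x (br y z) + br y (br z x) + br z (br x y) = 0"
begin

lemma br_zero_right [simp]: "br x 0 = 0"
  using br_add_right[of x 0 0] by simp

lemma br_neg_right [simp]: "br x (- y) = - br x y"
  using br_scale_right[of x "-1" y] by simp

lemma br_diff_right: "br x (y - z) = br x y - br x z"
  using br_scale_right[of x "-1" z] br_add_right[of x y "-z"] by simp

lemma br_antisym: "br y x = - br x y"
proof -
  have "0 = br (x + y) (x + y)" by (simp add: br_self)
  also have "\<dots> = br x x + br x y + (br y x + br y y)"
    by (simp add: br_add_left br_add_right add.assoc)
  finally have "br x y + br y x = 0" by (simp add: br_self)
  then show ?thesis by (simp add: eq_neg_iff_add_eq_0 add.commute)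
qed

end

lemma lie_algebra_imp_lie_bracket:
  assumes "lie_algebra sc br"
  shows "lie_bracket sc br"
  using assms
  unfolding lie_algebra_def bilinear_map_def lie_bracket_def lie_bracket_axioms_def
    Vector_Spaces.linear_iff
  by blast

lemma (in vector_space) finite_dim_imp_basis:
  assumes "finite_dim scale"
  obtains Basis where "finite_dimensional_vector_space scale Basis"
proof -
  obtain S where S: "finite S" "span S = UNIV"
    using assms unfolding finite_dim_def by blast
  obtain Basis where B: "Basis \<subseteq> S" "independent Basis" "S \<subseteq> span Basis"
    using maximal_independent_subset by blast
  have "finite_dimensional_vector_space scale Basis"
  proof unfold_locales
    show "finite Basis" using B(1) S(1) finite_subset by blast
    show "independent Basis" by (fact B(2))
    show "span Basis = UNIV"
      using B(3) S(2) by (metis span_minimal subset_antisym subset_UNIV subspace_span)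
  qed
  then show thesis by (rule that)
qed

text \<open>The operators generated by A and B form a commutative algebra Ops, and the cyclic module
  N = Ops c inherits from it a commutative associative product with unit c.\<close>
locale commuting_operators = vector_space sc
  for sc :: "'k::field \<Rightarrow> 'v::ab_group_add \<Rightarrow> 'v" +
  fixes M :: "'v set" and A B :: "'v \<Rightarrow> 'v" and c :: 'v
  assumes subspace_M: "subspace M" and c_M: "c \<in> M"
    and A_add: "A (x + y) = A x + A y" and A_scale: "A (sc r x) = sc r (A x)"
    and B_add: "B (x + y) = B x + B y" and B_scale: "B (sc r x) = sc r (B x)"
    and A_M: "x \<in> M \<Longrightarrow> A x \<in> M" and B_M: "x \<in> M \<Longrightarrow> B x \<in> M"
    and AB_comm: "x \<in> M \<Longrightarrow> A (B x) = B (A x)"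
begin

text \<open>The operators built from the identity, A and B by composition with A or B, sums and scaling,
  i.e. the polynomials in A and B.\<close>
inductive_set Ops :: "('v \<Rightarrow> 'v) set" where
  Ops_id: "(\<lambda>x. x) \<in> Ops"
| Ops_A: "S \<in> Ops \<Longrightarrow> (\<lambda>x. A (S x)) \<in> Ops"
| Ops_B: "S \<in> Ops \<Longrightarrow> (\<lambda>x. B (S x)) \<in> Ops"
| Ops_plus: "S \<in> Ops \<Longrightarrow> R \<in> Ops \<Longrightarrow> (\<lambda>x. S x + R x) \<in> Ops"
| Ops_smult: "S \<in> Ops \<Longrightarrow> (\<lambda>x. sc r (S x)) \<in> Ops"

definition N :: "'v set" where "N = {S c | S. S \<in> Ops}"

lemma Ops_add: "S \<in> Ops \<Longrightarrow> S (x + y) = S x + S y"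
  by (induction S rule: Ops.induct) (auto simp: A_add B_add scale_right_distrib)

lemma Ops_scale: "S \<in> Ops \<Longrightarrow> S (sc r x) = sc r (S x)"
  by (induction S rule: Ops.induct) (auto simp: A_scale B_scale scale_right_distrib scale_left_commute)

lemma Ops_M: "S \<in> Ops \<Longrightarrow> x \<in> M \<Longrightarrow> S x \<in> M"
  by (induction S rule: Ops.induct)
     (auto simp: A_M B_M subspace_add[OF subspace_M] subspace_scale[OF subspace_M])

lemma Ops_comp: "S \<in> Ops \<Longrightarrow> R \<in> Ops \<Longrightarrow> (\<lambda>x. S (R x)) \<in> Ops"
  by (induction S rule: Ops.induct) (auto intro: Ops.intros)

lemma Ops_comm_A: "S \<in> Ops \<Longrightarrow> x \<in> M \<Longrightarrow> S (A x) = A (S x)"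
  by (induction S rule: Ops.induct) (auto simp: A_add A_scale AB_comm Ops_M)

lemma Ops_comm_B: "S \<in> Ops \<Longrightarrow> x \<in> M \<Longrightarrow> S (B x) = B (S x)"
  by (induction S rule: Ops.induct) (auto simp: B_add B_scale AB_comm Ops_M)

lemma Ops_comm:
  assumes "S \<in> Ops" "R \<in> Ops" "x \<in> M"
  shows "S (R x) = R (S x)"
  using assms(2,3)
  by (induction R arbitrary: x rule: Ops.induct)
     (auto simp: Ops_comm_A[OF assms(1)] Ops_comm_B[OF assms(1)] Ops_add[OF assms(1)]
       Ops_scale[OF assms(1)] Ops_M A_M B_M)

lemma N_M: "m \<in> N \<Longrightarrow> m \<in> M"
  unfolding N_def using Ops_M c_M by blast

lemma c_N: "c \<in> N"
  unfolding N_def using Ops_id by force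

lemma Ops_N: "S \<in> Ops \<Longrightarrow> m \<in> N \<Longrightarrow> S m \<in> N"
  unfolding N_def using Ops_comp by force

lemma A_N: "m \<in> N \<Longrightarrow> A m \<in> N"
  using Ops_N[OF Ops_A[OF Ops_id]] by simp

lemma B_N: "m \<in> N \<Longrightarrow> B m \<in> N"
  using Ops_N[OF Ops_B[OF Ops_id]] by simp

lemma subspace_N: "subspace N"
proof -
  have "m + k \<in> N" if "m \<in> N" "k \<in> N" for m k
    using that unfolding N_def by (force intro: Ops_plus)
  moreover have "sc r m \<in> N" if "m \<in> N" for r m
    using that unfolding N_def by (force intro: Ops_smult)
  moreover have "0 \<in> N"
    using calculation(2)[OF c_N, of 0] by simp
  ultimately show ?thesis unfolding subspace_def by blast
qed

lemma N_add: "m \<in> N \<Longrightarrow> k \<in> N \<Longrightarrow> m + k \<in> N"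
  and N_diff: "m \<in> N \<Longrightarrow> k \<in> N \<Longrightarrow> m - k \<in> N"
  and N_scale: "m \<in> N \<Longrightarrow> sc r m \<in> N"
  and N_neg: "m \<in> N \<Longrightarrow> - m \<in> N"
  and N_zero: "0 \<in> N"
  using subspace_add subspace_diff subspace_scale subspace_neg subspace_0 subspace_N by blast+

text \<open>An element of N is determined by any operator producing it from c; since the
  operators commute, this operator acts on N independently of the choice.\<close>
lemma Ops_eq_on_N:
  assumes "S \<in> Ops" "R \<in> Ops" "S c = R c" "m \<in> N"
  shows "S m = R m"
proof -
  obtain P where P: "P \<in> Ops" "m = P c" using assms(4) unfolding N_def by blast
  have "S m = P (S c)" using Ops_comm[OF assms(1) P(1) c_M] P(2) by simp
  also have "\<dots> = R m" using Ops_comm[OF assms(2) P(1) c_M] P(2) assms(3) by simp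
  finally show ?thesis .
qed

text \<open>The product of N: m \<cdot> k = S k for any operator S in Ops with S c = m.\<close>
definition mul :: "'v \<Rightarrow> 'v \<Rightarrow> 'v" where "mul m = (SOME S. S \<in> Ops \<and> S c = m)"

lemma mul_Ops: "m \<in> N \<Longrightarrow> mul m \<in> Ops \<and> mul m c = m"
  unfolding mul_def N_def by (rule someI_ex[of "\<lambda>S. S \<in> Ops \<and> S c = m"]) blast

lemma mul_N: "m \<in> N \<Longrightarrow> k \<in> N \<Longrightarrow> mul m k \<in> N"
  using mul_Ops Ops_N by blast

lemma mul_unit: "m \<in> N \<Longrightarrow> mul m c = m"
  using mul_Ops by blast

lemma mul_comm: "m \<in> N \<Longrightarrow> k \<in> N \<Longrightarrow> mul m k = mul k m"
  using mul_Ops Ops_comm c_M by metis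

lemma mul_left_comm: "m \<in> N \<Longrightarrow> l \<in> N \<Longrightarrow> k \<in> N \<Longrightarrow> mul m (mul l k) = mul l (mul m k)"
  using mul_Ops Ops_comm N_M by blast

lemma mul_add_right: "m \<in> N \<Longrightarrow> mul m (k + l) = mul m k + mul m l"
  using mul_Ops Ops_add by blast

lemma mul_scale_right: "m \<in> N \<Longrightarrow> mul m (sc r k) = sc r (mul m k)"
  using mul_Ops Ops_scale by blast

lemma mul_A: "m \<in> N \<Longrightarrow> k \<in> N \<Longrightarrow> mul m (A k) = A (mul m k)"
  using mul_Ops Ops_comm_A N_M by blast

lemma mul_B: "m \<in> N \<Longrightarrow> k \<in> N \<Longrightarrow> mul m (B k) = B (mul m k)"
  using mul_Ops Ops_comm_B N_M by blast

lemma mul_add_left: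
  assumes "m \<in> N" "m' \<in> N" "k \<in> N"
  shows "mul (m + m') k = mul m k + mul m' k"
proof -
  have S: "(\<lambda>x. mul m x + mul m' x) \<in> Ops" using mul_Ops assms Ops_plus by blast
  have mm': "m + m' \<in> N" using assms N_add by blast
  show ?thesis
    using Ops_eq_on_N[OF conjunct1[OF mul_Ops[OF mm']] S _ assms(3)] mul_unit assms mm' by simp
qed

lemma mul_scale_left:
  assumes "m \<in> N" "k \<in> N"
  shows "mul (sc r m) k = sc r (mul m k)"
proof -
  have S: "(\<lambda>x. sc r (mul m x)) \<in> Ops" using mul_Ops assms Ops_smult by blast
  have rm: "sc r m \<in> N" using assms N_scale by blast
  show ?thesis
    using Ops_eq_on_N[OF conjunct1[OF mul_Ops[OF rm]] S _ assms(2)] mul_unit assms rm by simp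
qed

lemma mul_zero_right: "m \<in> N \<Longrightarrow> mul m 0 = 0"
  using mul_scale_right[of m 0 0] by simp

lemma mul_neg_right: "m \<in> N \<Longrightarrow> mul m (- k) = - mul m k"
  using mul_scale_right[of m "-1" k] by simp

lemma mul_diff_right: "m \<in> N \<Longrightarrow> mul m (k - l) = mul m k - mul m l"
  using mul_add_right[of m k "- l"] mul_neg_right[of m l] by simp

lemma mul_zero_left: "k \<in> N \<Longrightarrow> mul 0 k = 0"
  using mul_scale_left[OF c_N, of k 0] by simp

lemma mul_neg_left: "m \<in> N \<Longrightarrow> k \<in> N \<Longrightarrow> mul (- m) k = - mul m k"
  using mul_scale_left[of m k "-1"] by simp

lemma mul_diff_left: "m \<in> N \<Longrightarrow> m' \<in> N \<Longrightarrow> k \<in> N \<Longrightarrow> mul (m - m') k = mul m k - mul m' k"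
  using mul_add_left[of m "- m'" k] mul_neg_left[of m' k] N_neg[of m'] by simp

lemma mul_unit_left: "m \<in> N \<Longrightarrow> mul c m = m"
  using mul_comm[OF c_N] mul_unit by simp

lemma mul_A_left: "k \<in> N \<Longrightarrow> m \<in> N \<Longrightarrow> mul (A k) m = A (mul k m)"
  using mul_comm mul_A A_N by metis

lemma mul_B_left: "k \<in> N \<Longrightarrow> m \<in> N \<Longrightarrow> mul (B k) m = B (mul k m)"
  using mul_comm mul_B B_N by metis

end

text \<open>Fitting's lemma for a linear endomorphism f of a subspace V of a finite-dimensional space:
  V splits into the stable image of f (where f is invertible) and the stable kernel (where f is
  nilpotent), and the two projections commute with everything commuting with f.\<close>
locale fitting_decomposition = finite_dimensional_vector_space sc Basis
  for sc :: "'k::field \<Rightarrow> 'v::ab_group_add \<Rightarrow> 'v" and Basis +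
  fixes V :: "'v set" and f :: "'v \<Rightarrow> 'v"
  assumes subspace_V: "subspace V"
    and f_add: "f (x + y) = f x + f y" and f_scale: "f (sc r x) = sc r (f x)"
    and f_V: "x \<in> V \<Longrightarrow> f x \<in> V"
begin

lemma f_zero [simp]: "f 0 = 0"
  using f_scale[of 0 0] by simp

lemma fpow_add: "(f ^^ n) (x + y) = (f ^^ n) x + (f ^^ n) y"
  by (induction n) (simp_all add: f_add)

lemma fpow_scale: "(f ^^ n) (sc r x) = sc r ((f ^^ n) x)"
  by (induction n) (simp_all add: f_scale)

lemma fpow_diff: "(f ^^ n) (x - y) = (f ^^ n) x - (f ^^ n) y"
  using fpow_add[of n x "sc (-1) y"] fpow_scale[of n "-1" y] by simp

lemma fpow_V: "x \<in> V \<Longrightarrow> (f ^^ n) x \<in> V"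
  by (induction n) (simp_all add: f_V)

definition image_pow :: "nat \<Rightarrow> 'v set" where "image_pow n = (f ^^ n) ` V"
definition kernel_pow :: "nat \<Rightarrow> 'v set" where "kernel_pow n = {x \<in> V. (f ^^ n) x = 0}"

lemma subspace_image_pow: "subspace (image_pow n)"
  unfolding subspace_def image_pow_def
proof (intro conjI ballI allI)
  have "(f ^^ n) 0 = 0" by (induction n) simp_all
  then show "0 \<in> (f ^^ n) ` V"
    using subspace_0[OF subspace_V] by (metis image_eqI)
next
  fix x y assume "x \<in> (f ^^ n) ` V" "y \<in> (f ^^ n) ` V"
  then obtain u v where "u \<in> V" "v \<in> V" "x = (f ^^ n) u" "y = (f ^^ n) v" by blast
  then show "x + y \<in> (f ^^ n) ` V"
    using subspace_add[OF subspace_V] fpow_add by (intro image_eqI[of _ _ "u + v"]) auto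
next
  fix r x assume "x \<in> (f ^^ n) ` V"
  then obtain u where "u \<in> V" "x = (f ^^ n) u" by blast
  then show "sc r x \<in> (f ^^ n) ` V"
    using subspace_scale[OF subspace_V] fpow_scale by (intro image_eqI[of _ _ "sc r u"]) auto
qed

lemma subspace_kernel_pow: "subspace (kernel_pow n)"
  unfolding subspace_def kernel_pow_def
  using subspace_0[OF subspace_V] subspace_add[OF subspace_V] subspace_scale[OF subspace_V]
    fpow_add fpow_scale fpow_scale[of n 0 0]
  by simp

lemma image_pow_Suc: "image_pow (Suc n) = f ` image_pow n"
  unfolding image_pow_def by (simp add: image_comp)

lemma image_pow_Suc_subset: "image_pow (Suc n) \<subseteq> image_pow n"
  unfolding image_pow_def using f_V by (auto simp: funpow_Suc_right simp del: funpow.simps)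

lemma kernel_pow_Suc_subset: "kernel_pow n \<subseteq> kernel_pow (Suc n)"
  unfolding kernel_pow_def by auto

text \<open>Both chains stabilise, by dimension: a subspace of minimal dimension in the chain of images,
  resp. of maximal dimension in the chain of kernels, cannot shrink, resp. grow, any more.\<close>
lemma image_pow_stable: "\<exists>K. \<forall>j. image_pow (K + j) = image_pow K"
proof -
  obtain K where K: "\<forall>n. dim (image_pow K) \<le> dim (image_pow n)"
    using ex_has_least_nat[of "\<lambda>n. True" 0 "\<lambda>n. dim (image_pow n)"] by blast
  have step: "image_pow (Suc K) = image_pow K"
    using subspace_dim_equal[OF subspace_image_pow subspace_image_pow image_pow_Suc_subset] K
    by blast
  have "image_pow (K + j) = image_pow K" for j
  proof (induction j)
    case (Suc j)
    have "image_pow (K + Suc j) = f ` image_pow (K + j)" using image_pow_Suc by simp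
    also have "\<dots> = image_pow (Suc K)" using Suc image_pow_Suc by simp
    finally show ?case using step by simp
  qed simp
  then show ?thesis by blast
qed

lemma kernel_pow_stable: "\<exists>K. \<forall>j. kernel_pow (K + j) = kernel_pow K"
proof -
  obtain K where K: "\<forall>n. dimension - dim (kernel_pow K) \<le> dimension - dim (kernel_pow n)"
    using ex_has_least_nat[of "\<lambda>n. True" 0 "\<lambda>n. dimension - dim (kernel_pow n)"] by blast
  have "dim (kernel_pow (Suc K)) \<le> dim (kernel_pow K)"
    using K[rule_format, of "Suc K"] dim_subset_UNIV[of "kernel_pow (Suc K)"]
      dim_subset_UNIV[of "kernel_pow K"]
    by linarith
  then have step: "kernel_pow (Suc K) = kernel_pow K"
    using subspace_dim_equal[OF subspace_kernel_pow subspace_kernel_pow kernel_pow_Suc_subset]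
    by metis
  have "x \<in> kernel_pow K" if "x \<in> kernel_pow (K + j)" for j x
    using that
  proof (induction j arbitrary: x)
    case (Suc j)
    then have "f x \<in> kernel_pow (K + j)"
      unfolding kernel_pow_def using f_V by (auto simp: funpow_Suc_right simp del: funpow.simps)
    then have "f x \<in> kernel_pow K" using Suc.IH by blast
    then have "x \<in> kernel_pow (Suc K)"
      using Suc.prems unfolding kernel_pow_def by (auto simp: funpow_Suc_right simp del: funpow.simps)
    then show ?case using step by simp
  qed simp
  moreover have "kernel_pow K \<subseteq> kernel_pow (K + j)" for j
    by (induction j) (use kernel_pow_Suc_subset in auto)
  ultimately show ?thesis by blast
qed

definition index :: nat where
  "index = (SOME K. (\<forall>j. image_pow (K + j) = image_pow K) \<and> (\<forall>j. kernel_pow (K + j) = kernel_pow K))"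

lemma index_stable:
  "image_pow (index + j) = image_pow index" "kernel_pow (index + j) = kernel_pow index"
proof -
  obtain K1 where K1: "\<forall>j. image_pow (K1 + j) = image_pow K1" using image_pow_stable by blast
  obtain K2 where K2: "\<forall>j. kernel_pow (K2 + j) = kernel_pow K2" using kernel_pow_stable by blast
  have "(\<forall>j. image_pow (K1 + K2 + j) = image_pow (K1 + K2)) \<and>
        (\<forall>j. kernel_pow (K1 + K2 + j) = kernel_pow (K1 + K2))"
    using K1 K2 by (metis add.assoc add.commute)
  then have "(\<forall>j. image_pow (index + j) = image_pow index) \<and> (\<forall>j. kernel_pow (index + j) = kernel_pow index)"
    unfolding index_def by (rule someI)
  then show "image_pow (index + j) = image_pow index" "kernel_pow (index + j) = kernel_pow index"
    by blast+
qed

definition core :: "'v set" where "core = image_pow index"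

lemma core_V: "y \<in> core \<Longrightarrow> y \<in> V"
  unfolding core_def image_pow_def using fpow_V by blast

lemma f_core: "f ` core = core"
  using image_pow_Suc[of index] index_stable(1)[of 1] unfolding core_def by simp

lemma fpow_core: "(f ^^ index) ` core = core"
  using index_stable(1)[of index] unfolding core_def image_pow_def by (simp add: image_comp funpow_add)

text \<open>Stability of the kernels makes f ^^ index injective on the core.\<close>
lemma fpow_inj_core: "y \<in> core \<Longrightarrow> (f ^^ index) y = 0 \<Longrightarrow> y = 0"
proof -
  assume y: "y \<in> core" and zero: "(f ^^ index) y = 0"
  then obtain z where z: "z \<in> V" "y = (f ^^ index) z" unfolding core_def image_pow_def by blast
  then have "z \<in> kernel_pow (index + index)" unfolding kernel_pow_def using zero by (simp add: funpow_add)
  then have "z \<in> kernel_pow index" using index_stable(2) by simp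
  then show "y = 0" using z unfolding kernel_pow_def by simp
qed

lemma core_eq: "y \<in> core \<Longrightarrow> y' \<in> core \<Longrightarrow> (f ^^ index) y = (f ^^ index) y' \<Longrightarrow> y = y'"
  using fpow_inj_core[of "y - y'"] subspace_diff[OF subspace_image_pow] unfolding core_def
  by (simp add: fpow_diff)

text \<open>E projects V onto the core along the Fitting null-component; F is the complementary projection.\<close>
definition E :: "'v \<Rightarrow> 'v" where "E x = (THE y. y \<in> core \<and> (f ^^ index) y = (f ^^ index) x)"
definition F :: "'v \<Rightarrow> 'v" where "F x = x - E x"

lemma E_spec: "x \<in> V \<Longrightarrow> E x \<in> core \<and> (f ^^ index) (E x) = (f ^^ index) x"
proof -
  assume x: "x \<in> V"
  have "(f ^^ index) x \<in> core" unfolding core_def image_pow_def using x by blast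
  then obtain y where y: "y \<in> core" "(f ^^ index) y = (f ^^ index) x"
    using fpow_core by (metis imageE)
  show ?thesis unfolding E_def by (rule theI[of _ y]) (use y core_eq in auto)
qed

lemma E_unique: "x \<in> V \<Longrightarrow> y \<in> core \<Longrightarrow> (f ^^ index) y = (f ^^ index) x \<Longrightarrow> E x = y"
  using E_spec core_eq by metis

lemma E_core: "x \<in> V \<Longrightarrow> E x \<in> core"
  using E_spec by blast

lemma E_V: "x \<in> V \<Longrightarrow> E x \<in> V"
  using E_core core_V by blast

lemma F_V: "x \<in> V \<Longrightarrow> F x \<in> V"
  unfolding F_def using E_V subspace_diff[OF subspace_V] by blast

lemma E_plus_F: "E x + F x = x"
  unfolding F_def by simp

lemma E_idem_core: "y \<in> core \<Longrightarrow> E y = y"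
  using E_unique core_V by blast

lemma fpow_F: "x \<in> V \<Longrightarrow> (f ^^ index) (F x) = 0"
  unfolding F_def using E_spec by (simp add: fpow_diff)

lemma E_E: "x \<in> V \<Longrightarrow> E (E x) = E x"
  using E_idem_core E_core by blast

lemma E_F: "x \<in> V \<Longrightarrow> E (F x) = 0"
  using E_unique[OF F_V] fpow_F subspace_0[OF subspace_image_pow] fpow_scale[of index 0 0]
  unfolding core_def by simp

lemma F_E: "x \<in> V \<Longrightarrow> F (E x) = 0"
  unfolding F_def using E_E by simp

lemma F_F: "x \<in> V \<Longrightarrow> F (F x) = F x"
  unfolding F_def using E_F F_def by simp

lemma E_add: "x \<in> V \<Longrightarrow> y \<in> V \<Longrightarrow> E (x + y) = E x + E y"
  by (rule E_unique)
     (use E_spec subspace_add[OF subspace_V] subspace_add[OF subspace_image_pow] fpow_add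
      in \<open>auto simp: core_def\<close>)

lemma E_scale: "x \<in> V \<Longrightarrow> E (sc r x) = sc r (E x)"
  by (rule E_unique)
     (use E_spec subspace_scale[OF subspace_V] subspace_scale[OF subspace_image_pow] fpow_scale
      in \<open>auto simp: core_def\<close>)

lemma F_add: "x \<in> V \<Longrightarrow> y \<in> V \<Longrightarrow> F (x + y) = F x + F y"
  unfolding F_def using E_add by (simp add: algebra_simps)

lemma F_scale: "x \<in> V \<Longrightarrow> F (sc r x) = sc r (F x)"
  unfolding F_def using E_scale by (simp add: scale_right_diff_distrib)

lemma E_diff: "x \<in> V \<Longrightarrow> y \<in> V \<Longrightarrow> E (x - y) = E x - E y"
  using E_add[of x "sc (-1) y"] E_scale[of y "-1"] subspace_scale[OF subspace_V, of y "-1"] by simp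

lemma F_diff: "x \<in> V \<Longrightarrow> y \<in> V \<Longrightarrow> F (x - y) = F x - F y"
  unfolding F_def using E_diff by (simp add: algebra_simps)

lemma E_neg: "x \<in> V \<Longrightarrow> E (- x) = - E x"
  using E_scale[of x "-1"] by simp

lemma F_neg: "x \<in> V \<Longrightarrow> F (- x) = - F x"
  unfolding F_def using E_neg by simp

lemma E_comm:
  assumes S_V: "\<And>x. x \<in> V \<Longrightarrow> S x \<in> V"
    and S_add: "\<And>x y. x \<in> V \<Longrightarrow> y \<in> V \<Longrightarrow> S (x + y) = S x + S y"
    and S_f: "\<And>x. x \<in> V \<Longrightarrow> S (f x) = f (S x)"
    and x: "x \<in> V"
  shows "S (E x) = E (S x)"
proof -
  have S_fpow: "z \<in> V \<Longrightarrow> S ((f ^^ n) z) = (f ^^ n) (S z)" for z n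
    by (induction n) (simp_all add: S_f fpow_V)
  obtain z where z: "z \<in> V" "E x = (f ^^ index) z"
    using E_core[OF x] unfolding core_def image_pow_def by blast
  have "S (E x) \<in> core" using z S_fpow S_V unfolding core_def image_pow_def by auto
  moreover have "(f ^^ index) (S (E x)) = (f ^^ index) (S x)"
    using S_fpow E_V E_spec x by metis
  ultimately show ?thesis using E_unique[OF S_V[OF x]] by metis
qed

lemma F_comm:
  assumes S_V: "\<And>x. x \<in> V \<Longrightarrow> S x \<in> V"
    and S_add: "\<And>x y. x \<in> V \<Longrightarrow> y \<in> V \<Longrightarrow> S (x + y) = S x + S y"
    and S_f: "\<And>x. x \<in> V \<Longrightarrow> S (f x) = f (S x)"
    and x: "x \<in> V"
  shows "S (F x) = F (S x)"
proof -
  have "S x = S (E x) + S (F x)" using S_add[OF E_V[OF x] F_V[OF x]] E_plus_F by metis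
  then show ?thesis using E_comm[OF assms] unfolding F_def by (simp add: algebra_simps)
qed

text \<open>Composing f, the projection F and any additive map commuting with f gives a map
  that is nilpotent on V: f is nilpotent on the image of F.\<close>
lemma nilpotent_through_F:
  assumes S_V: "\<And>x. x \<in> V \<Longrightarrow> S x \<in> V"
    and S_add: "\<And>x y. x \<in> V \<Longrightarrow> y \<in> V \<Longrightarrow> S (x + y) = S x + S y"
    and S_f: "\<And>x. x \<in> V \<Longrightarrow> S (f x) = f (S x)"
    and k: "k \<in> V"
  shows "((\<lambda>x. f (F (S x))) ^^ Suc index) k = 0"
proof -
  let ?T = "\<lambda>x. f (F (S x))"
  have S_fpow: "z \<in> V \<Longrightarrow> S ((f ^^ n) z) = (f ^^ n) (S z)" for z n
    by (induction n) (simp_all add: S_f fpow_V)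
  have F_fpow: "z \<in> V \<Longrightarrow> F ((f ^^ n) z) = (f ^^ n) (F z)" for z n
    by (rule F_comm[symmetric]) (simp_all add: fpow_V fpow_add funpow_swap1)
  have S_pow_V: "z \<in> V \<Longrightarrow> (S ^^ n) z \<in> V" for z n
    by (induction n) (simp_all add: S_V)
  have "(?T ^^ Suc n) k = (f ^^ Suc n) (F ((S ^^ Suc n) k))" for n
  proof (induction n)
    case (Suc n)
    let ?z = "(S ^^ Suc n) k"
    have z: "?z \<in> V" using S_pow_V k .
    have "(?T ^^ Suc (Suc n)) k = f (F (S ((f ^^ Suc n) (F ?z))))"
      using Suc.IH by simp
    also have "\<dots> = f (F ((f ^^ Suc n) (F (S ?z))))"
      by (simp only: S_fpow[OF F_V[OF z]] F_comm[OF assms(1-3) z])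
    also have "\<dots> = (f ^^ Suc (Suc n)) (F (S ?z))"
      unfolding F_fpow[OF F_V[OF S_V[OF z]]] F_F[OF S_V[OF z]] by simp
    finally show ?case by simp
  qed simp
  then have "(?T ^^ Suc index) k = (f ^^ Suc index) (F ((S ^^ Suc index) k))" .
  also have "\<dots> = f ((f ^^ index) (F ((S ^^ Suc index) k)))"
    by (subst funpow.simps(2)) simp
  also have "\<dots> = 0"
    using fpow_F[OF S_pow_V[OF k], of "Suc index"] by (simp del: funpow.simps)
  finally show ?thesis .
qed

end

locale codim_one_abelian_ideal = lie_bracket sc br
  for sc :: "'k::field \<Rightarrow> 'v::ab_group_add \<Rightarrow> 'v" and br +
  fixes I :: "'v set" and x0 :: 'v
  assumes subspace_I: "subspace I"
    and I_abelian: "m \<in> I \<Longrightarrow> m' \<in> I \<Longrightarrow> br m m' = 0"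
    and x0_br_I: "m \<in> I \<Longrightarrow> br x0 m \<in> I"
    and x0_notin: "x0 \<notin> I"
    and x0_I_span: "\<exists>t. x - sc t x0 \<in> I"
begin

text \<open>The x0-coordinate t(x), well defined since x0 is not in I.\<close>
definition coord :: "'v \<Rightarrow> 'k" where "coord x = (SOME t. x - sc t x0 \<in> I)"

lemma coord_spec: "x - sc (coord x) x0 \<in> I"
  unfolding coord_def using x0_I_span by (rule someI_ex)

lemma coord_unique:
  assumes "x - sc t x0 \<in> I"
  shows "coord x = t"
proof (rule ccontr)
  assume ne: "coord x \<noteq> t"
  have "sc (t - coord x) x0 = (x - sc (coord x) x0) - (x - sc t x0)"
    by (simp add: algebra_simps scale_left_diff_distrib)
  then have "sc (t - coord x) x0 \<in> I"
    using coord_spec assms subspace_diff[OF subspace_I] by metis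
  then have "sc (inverse (t - coord x)) (sc (t - coord x) x0) \<in> I"
    using subspace_scale[OF subspace_I] by blast
  then show False using ne x0_notin by simp
qed

lemma coord_I: "m \<in> I \<Longrightarrow> coord m = 0"
  by (rule coord_unique) simp

lemma coord_add: "coord (x + y) = coord x + coord y"
  by (rule coord_unique)
     (use subspace_add[OF subspace_I coord_spec coord_spec]
      in \<open>simp add: algebra_simps scale_left_distrib\<close>)

lemma coord_scale: "coord (sc r x) = r * coord x"
  by (rule coord_unique)
     (use subspace_scale[OF subspace_I coord_spec] in \<open>simp add: scale_right_diff_distrib\<close>)

text \<open>ad x0 maps all of g into I, so every product lies in I and has x0-coordinate zero.\<close>
lemma br_x0_I: "br x0 y \<in> I"
proof -
  have "br x0 y = br x0 (y - sc (coord y) x0)"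
    by (simp add: br_diff_right br_scale_right br_self)
  then show ?thesis using x0_br_I coord_spec by metis
qed

definition lr :: "'v \<Rightarrow> 'v \<Rightarrow> 'v" where "lr x y = sc (coord x) (br x0 y)"

lemma lr_complete_LR_structure: "complete_LR_structure sc br lr"
  unfolding complete_LR_structure_def LR_structure_def
proof (intro conjI allI)
  show "bilinear_map sc lr"
    unfolding bilinear_map_def Vector_Spaces.linear_iff lr_def
    by (simp add: vector_space_axioms br_add_right br_scale_right coord_add coord_scale
        scale_left_distrib scale_right_distrib)
next
  fix x y z
  show "lr x (lr y z) = lr y (lr x z)" unfolding lr_def by (simp add: br_scale_right mult.commute)
  show "lr (lr x y) z = lr (lr x z) y" unfolding lr_def using coord_I[OF br_x0_I] coord_scale by simp
next
  fix x y
  define m where "m = x - sc (coord x) x0"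
  define m' where "m' = y - sc (coord y) x0"
  have I: "m \<in> I" "m' \<in> I" unfolding m_def m'_def using coord_spec by blast+
  have "br x y = br (sc (coord x) x0 + m) (sc (coord y) x0 + m')"
    unfolding m_def m'_def by simp
  also have "\<dots> = sc (coord x) (br x0 m') - sc (coord y) (br x0 m)"
    using I_abelian[OF I] br_antisym[of x0 m]
    by (simp add: br_add_left br_add_right br_scale_left br_scale_right br_self)
  also have "\<dots> = lr x y - lr y x"
    unfolding lr_def m_def m'_def by (simp add: br_diff_right br_scale_right br_self)
  finally show "lr x y - lr y x = br x y" by simp
next
  fix y
  have "((\<lambda>x. lr x y) ^^ 2) x = 0" for x
    unfolding numeral_2_eq_2 lr_def using coord_I[OF br_x0_I] coord_scale by simp
  then show "\<exists>n. (\<lambda>x. lr x y) ^^ n = (\<lambda>_. 0)" by blast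
qed

end

lemma (in lie_bracket) abelian_complete:
  assumes "\<And>x y. br x y = 0"
  shows "complete_LR_structure sc br (\<lambda>x y. 0)"
  unfolding complete_LR_structure_def LR_structure_def bilinear_map_def Vector_Spaces.linear_iff
  using assms vector_space_axioms by (auto intro!: exI[of _ 1])

locale two_generated_metabelian =
  lie_bracket sc br + finite_dimensional_vector_space sc Basis
  for sc :: "'k::field \<Rightarrow> 'v::ab_group_add \<Rightarrow> 'v" and br Basis +
  fixes a b :: 'v
  assumes metabelian: "x \<in> derived sc br \<Longrightarrow> y \<in> derived sc br \<Longrightarrow> br x y = 0"
    and generated: "generated_subalgebra sc br {a, b} = UNIV"
begin

lemma br_derived: "br x y \<in> derived sc br"
  unfolding derived_def by (rule span_base) blast

text \<open>ad a and ad b commute on the derived algebra, since [x, [a, b]] = 0 there.\<close>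
lemma ad_a_ad_b_comm:
  assumes "x \<in> derived sc br"
  shows "br a (br b x) = br b (br a x)"
proof -
  have "br x (br a b) = 0" using metabelian[OF assms br_derived] .
  then have "br a (br b x) + br b (br x a) = 0" using jacobi[of a b x] by simp
  then show ?thesis using br_antisym[of x a] by simp
qed

sublocale cyc?: commuting_operators sc "derived sc br" "br a" "br b" "br a b"
  by unfold_locales
     (simp_all add: br_derived br_add_right br_scale_right ad_a_ad_b_comm, simp add: derived_def)

sublocale fit?: fitting_decomposition sc Basis N "br b"
  by unfold_locales (simp_all add: subspace_N br_add_right br_scale_right B_N)

lemma N_abelian: "m \<in> N \<Longrightarrow> k \<in> N \<Longrightarrow> br m k = 0"
  using metabelian N_M by blast

lemma br_coords:
  assumes "m \<in> N" "m' \<in> N"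
  shows "br (sc \<alpha> a + sc \<beta> b + m) (sc \<alpha>' a + sc \<beta>' b + m') =
    sc (\<alpha> * \<beta>') (br a b) - sc (\<alpha>' * \<beta>) (br a b) + sc \<alpha> (br a m') + sc \<beta> (br b m')
      - sc \<alpha>' (br a m) - sc \<beta>' (br b m)"
proof -
  have "br b a = - br a b" "br m a = - br a m" "br m b = - br b m"
    using br_antisym by blast+
  then show ?thesis
    using N_abelian[OF assms]
    by (simp add: br_add_left br_add_right br_scale_left br_scale_right br_self algebra_simps)
qed

text \<open>Since g is generated by a and b, we have g = span {a, b} + N: the right-hand side is a Lie
  subalgebra containing a and b.\<close>
lemma decomposition: "\<exists>\<alpha> \<beta> m. m \<in> N \<and> x = sc \<alpha> a + sc \<beta> b + m"
proof -
  define W where "W = {sc \<alpha> a + sc \<beta> b + m | \<alpha> \<beta> m. m \<in> N}"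
  have W_br: "br x y \<in> N" if "x \<in> W" "y \<in> W" for x y
    using that unfolding W_def
    by (auto simp: br_coords intro!: N_add N_diff N_scale A_N B_N c_N)
  have W_N: "m \<in> W" if "m \<in> N" for m
  proof -
    have "m = sc 0 a + sc 0 b + m" by simp
    then show ?thesis using that unfolding W_def by blast
  qed
  have "subspace W"
    unfolding subspace_def
  proof (intro conjI ballI allI)
    show "0 \<in> W" using W_N N_zero by blast
  next
    fix x y assume "x \<in> W" "y \<in> W"
    then obtain \<alpha> \<beta> m \<alpha>' \<beta>' m' where "m \<in> N" "m' \<in> N"
      "x + y = sc (\<alpha> + \<alpha>') a + sc (\<beta> + \<beta>') b + (m + m')"
      unfolding W_def by (auto simp: scale_left_distrib algebra_simps)
    then show "x + y \<in> W" unfolding W_def using N_add by blast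
  next
    fix r x assume "x \<in> W"
    then obtain \<alpha> \<beta> m where "m \<in> N" "sc r x = sc (r * \<alpha>) a + sc (r * \<beta>) b + sc r m"
      unfolding W_def by (auto simp: scale_right_distrib)
    then show "sc r x \<in> W" unfolding W_def using N_scale by blast
  qed
  moreover have "a = sc 1 a + sc 0 b + 0" "b = sc 0 a + sc 1 b + 0" by simp_all
  then have "a \<in> W" "b \<in> W" unfolding W_def using N_zero by blast+
  ultimately have "generated_subalgebra sc br {a, b} \<subseteq> W"
    unfolding generated_subalgebra_def lie_subalgebra_def using W_br W_N by blast
  then show ?thesis using generated unfolding W_def by blast
qed

lemma N_ideal:
  assumes "m \<in> N"
  shows "br x m \<in> N"
proof -
  obtain \<alpha> \<beta> k where "k \<in> N" "x = sc \<alpha> a + sc \<beta> b + k" using decomposition by blast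
  then show ?thesis
    using assms by (simp add: br_add_left br_scale_left N_abelian A_N B_N N_add N_scale)
qed

lemma dependent_mod_N_codim_one:
  assumes "sc \<alpha> a + sc \<beta> b \<in> N" "\<alpha> \<noteq> 0 \<or> \<beta> \<noteq> 0"
  shows "\<exists>x0. \<forall>x. \<exists>t. x - sc t x0 \<in> N"
proof (cases "\<alpha> = 0")
  case True
  then have "b \<in> N" using assms N_scale[of "sc \<beta> b" "inverse \<beta>"] by simp
  have "x - sc \<alpha>' a \<in> N" if "m \<in> N" "x = sc \<alpha>' a + sc \<beta>' b + m" for x \<alpha>' \<beta>' m
    using that N_add[OF N_scale[OF \<open>b \<in> N\<close>]] by (simp add: algebra_simps)
  then show ?thesis using decomposition by metis
next
  case False
  have "x - sc (\<beta>' - \<alpha>' / \<alpha> * \<beta>) b \<in> N"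
    if "m \<in> N" "x = sc \<alpha>' a + sc \<beta>' b + m" for x \<alpha>' \<beta>' m
  proof -
    have "x - sc (\<beta>' - \<alpha>' / \<alpha> * \<beta>) b = m + sc (\<alpha>' / \<alpha>) (sc \<alpha> a + sc \<beta> b)"
      using that False by (simp add: algebra_simps scale_left_diff_distrib)
    then show ?thesis using that(1) N_add N_scale assms(1) by metis
  qed
  then show ?thesis using decomposition by metis
qed

text \<open>The commutation of ad a and ad b on N, oriented for normalisation.\<close>
lemma ad_b_ad_a: "x \<in> N \<Longrightarrow> br b (br a x) = br a (br b x)"
  using AB_comm N_M by simp

lemma E_ad_a: "x \<in> N \<Longrightarrow> E (br a x) = br a (E x)"
  and F_ad_a: "x \<in> N \<Longrightarrow> F (br a x) = br a (F x)"
  and E_ad_b: "x \<in> N \<Longrightarrow> E (br b x) = br b (E x)"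
  and F_ad_b: "x \<in> N \<Longrightarrow> F (br b x) = br b (F x)"
  using E_comm[of "br a"] F_comm[of "br a"] E_comm[of "br b"] F_comm[of "br b"]
  by (simp_all add: A_N B_N br_add_right ad_b_ad_a)

lemma E_mul: "m \<in> N \<Longrightarrow> x \<in> N \<Longrightarrow> mul m (E x) = E (mul m x)"
  and F_mul: "m \<in> N \<Longrightarrow> x \<in> N \<Longrightarrow> mul m (F x) = F (mul m x)"
  using E_comm[of "mul m"] F_comm[of "mul m"] by (simp_all add: mul_N mul_add_right mul_B)

lemma E_mul_left: "k \<in> N \<Longrightarrow> m \<in> N \<Longrightarrow> mul (E k) m = E (mul k m)"
  and F_mul_left: "k \<in> N \<Longrightarrow> m \<in> N \<Longrightarrow> mul (F k) m = F (mul k m)"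
  by (simp_all add: mul_comm[of _ m] E_V F_V E_mul F_mul)

text \<open>An element w of the Fitting one-component with [b, w] = E c; it exists since ad b
  maps the core onto itself.\<close>
definition w :: 'v where "w = (SOME y. y \<in> core \<and> br b y = E (br a b))"

lemma w_spec: "w \<in> core \<and> br b w = E (br a b)"
proof -
  have "E (br a b) \<in> br b ` core" using E_core[OF c_N] f_core by simp
  then have "\<exists>y. y \<in> core \<and> br b y = E (br a b)" by force
  then show ?thesis unfolding w_def by (rule someI_ex)
qed

lemma w_N: "w \<in> N" and ad_b_w: "br b w = E (br a b)" and E_w: "E w = w" and F_w: "F w = 0"
  using w_spec core_V E_idem_core unfolding F_def by auto

lemma F_mul_w:
  assumes "k \<in> N"
  shows "F (mul w k) = 0"
proof -
  have "F (mul w k) = mul k (F w)"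
    using mul_comm[OF w_N assms] F_mul[OF assms w_N] by simp
  then show ?thesis using F_w mul_zero_right[OF assms] by simp
qed

lemma F_mul_w_left: "k \<in> N \<Longrightarrow> F (mul k w) = 0"
  using F_mul_w mul_comm[OF w_N] by simp

text \<open>Rewrite rules bringing expressions in ad a, ad b, E, F and mul on N into a normal form
  ad a (ad b (E/F (mul \<dots>))); used to verify the identities defining the LR-structure.\<close>
lemmas normalize =
  br_add_right br_scale_right br_diff_right br_neg_right br_zero_right
  E_add E_scale E_diff E_neg F_add F_scale F_diff F_neg E_E F_F E_F F_E
  mul_add_right mul_scale_right mul_diff_right mul_neg_right mul_zero_right
  mul_add_left mul_scale_left mul_diff_left mul_neg_left mul_zero_left
  mul_unit mul_unit_left mul_comm mul_left_comm mul_A mul_B mul_A_left mul_B_left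
  E_mul F_mul E_mul_left F_mul_left E_ad_a F_ad_a E_ad_b F_ad_b ad_b_ad_a
  ad_b_w E_w F_w F_mul_w F_mul_w_left
  A_N B_N E_V F_V mul_N N_add N_diff N_scale N_neg N_zero c_N w_N

end

locale two_generated_nondegenerate = two_generated_metabelian sc br Basis a b
  for sc :: "'k::field \<Rightarrow> 'v::ab_group_add \<Rightarrow> 'v" and br Basis a b +
  assumes independent_mod_N: "sc \<alpha> a + sc \<beta> b \<in> N \<Longrightarrow> \<alpha> = 0 \<and> \<beta> = 0"
begin

definition coords :: "'v \<Rightarrow> 'k \<times> 'k \<times> 'v" where
  "coords x = (SOME (\<alpha>, \<beta>, m). m \<in> N \<and> x = sc \<alpha> a + sc \<beta> b + m)"

definition ca :: "'v \<Rightarrow> 'k" where "ca x = fst (coords x)"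
definition cb :: "'v \<Rightarrow> 'k" where "cb x = fst (snd (coords x))"
definition cN :: "'v \<Rightarrow> 'v" where "cN x = snd (snd (coords x))"

lemma coords_spec: "cN x \<in> N \<and> x = sc (ca x) a + sc (cb x) b + cN x"
proof -
  obtain \<alpha> \<beta> m where "m \<in> N" "x = sc \<alpha> a + sc \<beta> b + m" using decomposition by blast
  then have "\<exists>t. case t of (\<alpha>, \<beta>, m) \<Rightarrow> m \<in> N \<and> x = sc \<alpha> a + sc \<beta> b + m" by blast
  from someI_ex[OF this]
  have "case coords x of (\<alpha>, \<beta>, m) \<Rightarrow> m \<in> N \<and> x = sc \<alpha> a + sc \<beta> b + m"
    by (simp only: coords_def)
  then show ?thesis unfolding ca_def cb_def cN_def by (cases "coords x") simp
qed

lemma cN_N [simp]: "cN x \<in> N"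
  and coords_eq: "x = sc (ca x) a + sc (cb x) b + cN x"
  using coords_spec by blast+

lemma coords_unique:
  assumes m: "m \<in> N" and x: "x = sc \<alpha> a + sc \<beta> b + m"
  shows "ca x = \<alpha> \<and> cb x = \<beta> \<and> cN x = m"
proof -
  have "sc (ca x) a + sc (cb x) b + cN x = sc \<alpha> a + sc \<beta> b + m"
    using coords_eq[of x] x by simp
  then have eq: "sc (ca x - \<alpha>) a + sc (cb x - \<beta>) b = m - cN x"
    by (simp add: scale_left_diff_distrib algebra_simps)
  then have "sc (ca x - \<alpha>) a + sc (cb x - \<beta>) b \<in> N"
    using N_diff[OF m cN_N] by simp
  then have "ca x = \<alpha> \<and> cb x = \<beta>"
    using independent_mod_N by fastforce
  then show ?thesis using eq by simp
qed

lemma coords_N [simp]: "k \<in> N \<Longrightarrow> ca k = 0" "k \<in> N \<Longrightarrow> cb k = 0" "k \<in> N \<Longrightarrow> cN k = k"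
  using coords_unique[of k k 0 0] by simp_all

lemma coords_add: "ca (x + y) = ca x + ca y" "cb (x + y) = cb x + cb y" "cN (x + y) = cN x + cN y"
proof -
  have "x + y = (sc (ca x) a + sc (cb x) b + cN x) + (sc (ca y) a + sc (cb y) b + cN y)"
    by (rule arg_cong2[where f = "(+)"]; rule coords_eq)
  also have "\<dots> = sc (ca x + ca y) a + sc (cb x + cb y) b + (cN x + cN y)"
    by (simp add: scale_left_distrib add_ac)
  finally have "x + y = sc (ca x + ca y) a + sc (cb x + cb y) b + (cN x + cN y)" .
  then show "ca (x + y) = ca x + ca y" "cb (x + y) = cb x + cb y" "cN (x + y) = cN x + cN y"
    using coords_unique[OF N_add[OF cN_N cN_N]] by blast+
qed

lemma coords_scale: "ca (sc r x) = r * ca x" "cb (sc r x) = r * cb x" "cN (sc r x) = sc r (cN x)"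
proof -
  have "sc r x = sc (r * ca x) a + sc (r * cb x) b + sc r (cN x)"
    using coords_eq[of x] by (metis scale_right_distrib scale_scale)
  then show "ca (sc r x) = r * ca x" "cb (sc r x) = r * cb x" "cN (sc r x) = sc r (cN x)"
    using coords_unique[OF N_scale[OF cN_N]] by blast+
qed

text \<open>The LR-product x \<cdot> y, given through its pieces: Ra x = x \<cdot> a, Rb x = x \<cdot> b and
  L x k = x \<cdot> k for k in N (expanding y), or equivalently La y = a \<cdot> y, Lb y = b \<cdot> y and
  R y k = k \<cdot> y for k in N (expanding x).\<close>
definition Ra :: "'v \<Rightarrow> 'v" where
  "Ra x = - sc (ca x) (br a w) - sc (cb x) (E (br a b))"
definition Rb :: "'v \<Rightarrow> 'v" where
  "Rb x = sc (ca x) (F (br a b)) - br b (F (cN x))"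
definition L :: "'v \<Rightarrow> 'v \<Rightarrow> 'v" where
  "L x k = sc (ca x) (br a k) + sc (cb x) (br b (E k)) - br a (br b (F (mul (cN x) k)))"
definition La :: "'v \<Rightarrow> 'v" where
  "La y = - sc (ca y) (br a w) + sc (cb y) (F (br a b)) + br a (cN y)"
definition Lb :: "'v \<Rightarrow> 'v" where
  "Lb y = - sc (ca y) (E (br a b)) + br b (E (cN y))"
definition R :: "'v \<Rightarrow> 'v \<Rightarrow> 'v" where
  "R y k = - sc (cb y) (br b (F k)) - br a (br b (F (mul (cN y) k)))"

definition lr :: "'v \<Rightarrow> 'v \<Rightarrow> 'v" where
  "lr x y = sc (ca y) (Ra x) + sc (cb y) (Rb x) + L x (cN y)"

lemma Ra_N: "Ra x \<in> N" and Rb_N: "Rb x \<in> N" and L_N: "k \<in> N \<Longrightarrow> L x k \<in> N"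
  and La_N: "La x \<in> N" and Lb_N: "Lb x \<in> N" and R_N: "k \<in> N \<Longrightarrow> R x k \<in> N"
  unfolding Ra_def Rb_def L_def La_def Lb_def R_def by (simp_all add: normalize)

lemma lr_N: "lr x y \<in> N"
  unfolding lr_def by (simp add: Ra_N Rb_N L_N N_add N_scale)

lemma lr_expand_left: "lr x y = sc (ca x) (La y) + sc (cb x) (Lb y) + R y (cN x)"
  unfolding lr_def Ra_def Rb_def L_def La_def Lb_def R_def by (simp add: normalize algebra_simps)

lemma lr_N_right: "k \<in> N \<Longrightarrow> lr x k = L x k"
  unfolding lr_def by simp

lemma lr_N_left: "k \<in> N \<Longrightarrow> lr k y = R y k"
  unfolding lr_expand_left by simp

lemma L_add: "k \<in> N \<Longrightarrow> l \<in> N \<Longrightarrow> L x (k + l) = L x k + L x l"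
  and L_scale: "k \<in> N \<Longrightarrow> L x (sc r k) = sc r (L x k)"
  and R_add: "k \<in> N \<Longrightarrow> l \<in> N \<Longrightarrow> R y (k + l) = R y k + R y l"
  and R_scale: "k \<in> N \<Longrightarrow> R y (sc r k) = sc r (R y k)"
  unfolding L_def R_def by (simp_all add: normalize algebra_simps)

text \<open>The identities behind left-symmetry x \<cdot> (y \<cdot> z) = y \<cdot> (x \<cdot> z) \<dots>\<close>
lemma L_Ra: "L x (Ra y) = L y (Ra x)"
  and L_Rb: "L x (Rb y) = L y (Rb x)"
  and L_comm: "k \<in> N \<Longrightarrow> L x (L y k) = L y (L x k)"
  unfolding L_def Ra_def Rb_def by (simp_all add: normalize algebra_simps)

text \<open>\<dots> and right-commutativity (x \<cdot> y) \<cdot> z = (x \<cdot> z) \<cdot> y.\<close>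
lemma R_La: "R z (La y) = R y (La z)"
  and R_Lb: "R z (Lb y) = 0"
  and R_comm: "k \<in> N \<Longrightarrow> R z (R y k) = R y (R z k)"
  unfolding R_def La_def Lb_def by (simp_all add: normalize algebra_simps)

lemma lr_left_symmetric: "lr x (lr y z) = lr y (lr x z)"
proof -
  have "lr x (lr y z) = L x (lr y z)" using lr_N by (simp add: lr_N_right)
  also have "\<dots> = sc (ca z) (L x (Ra y)) + sc (cb z) (L x (Rb y)) + L x (L y (cN z))"
    unfolding lr_def by (simp add: L_add L_scale Ra_N Rb_N L_N N_add N_scale)
  also have "\<dots> = sc (ca z) (L y (Ra x)) + sc (cb z) (L y (Rb x)) + L y (L x (cN z))"
    by (simp add: L_Ra L_Rb L_comm)
  also have "\<dots> = L y (lr x z)"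
    unfolding lr_def by (simp add: L_add L_scale Ra_N Rb_N L_N N_add N_scale)
  also have "\<dots> = lr y (lr x z)" using lr_N by (simp add: lr_N_right)
  finally show ?thesis .
qed

lemma lr_right_commutative: "lr (lr x y) z = lr (lr x z) y"
proof -
  have "lr (lr x y) z = R z (lr x y)" using lr_N by (simp add: lr_N_left)
  also have "\<dots> = sc (ca x) (R z (La y)) + sc (cb x) (R z (Lb y)) + R z (R y (cN x))"
    unfolding lr_expand_left by (simp add: R_add R_scale La_N Lb_N R_N N_add N_scale)
  also have "\<dots> = sc (ca x) (R y (La z)) + sc (cb x) (R y (Lb z)) + R y (R z (cN x))"
    by (simp add: R_La R_Lb R_comm)
  also have "\<dots> = R y (lr x z)"
    unfolding lr_expand_left by (simp add: R_add R_scale La_N Lb_N R_N N_add N_scale)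
  also have "\<dots> = lr (lr x z) y" using lr_N by (simp add: lr_N_left)
  finally show ?thesis .
qed

text \<open>Eliminating E in favour of F reduces the commutator identity to a linear one.\<close>
lemma E_eq_diff_F: "x \<in> N \<Longrightarrow> E x = x - F x"
  unfolding F_def by simp

lemma lr_commutator: "lr x y - lr y x = br x y"
proof -
  have "br x y = br (sc (ca x) a + sc (cb x) b + cN x) (sc (ca y) a + sc (cb y) b + cN y)"
    by (rule arg_cong2[where f = br]; rule coords_eq)
  also have "\<dots> = sc (ca x * cb y) (br a b) - sc (ca y * cb x) (br a b) + sc (ca x) (br a (cN y))
      + sc (cb x) (br b (cN y)) - sc (ca y) (br a (cN x)) - sc (cb y) (br b (cN x))"
    by (rule br_coords) simp_all
  also have "\<dots> = lr x y - lr y x"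
    unfolding lr_def Ra_def Rb_def L_def
    by (simp add: E_eq_diff_F br_add_right br_scale_right br_diff_right F_add F_scale F_diff F_neg
        F_F A_N B_N F_V mul_N N_add N_diff N_scale N_neg c_N mul_comm[of "cN x"] algebra_simps)
  finally show ?thesis by simp
qed

lemma lr_bilinear: "bilinear_map sc lr"
proof -
  have "lr x (y + z) = lr x y + lr x z" "lr x (sc r y) = sc r (lr x y)" for x y z r
    unfolding lr_def
    by (simp_all add: coords_add coords_scale L_add L_scale scale_left_distrib scale_right_distrib
        algebra_simps)
  moreover have "lr (y + z) x = lr y x + lr z x" "lr (sc r y) x = sc r (lr y x)" for x y z r
    unfolding lr_expand_left
    by (simp_all add: coords_add coords_scale R_add R_scale scale_left_distrib scale_right_distrib
        algebra_simps)
  ultimately show ?thesis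
    unfolding bilinear_map_def Vector_Spaces.linear_iff using vector_space_axioms by blast
qed

text \<open>On N, right multiplication by y is ad b \<circ> F \<circ> g for an operator g commuting with ad b,
  hence nilpotent by the Fitting decomposition; and it maps all of g into N.\<close>
lemma R_factor: "k \<in> N \<Longrightarrow> R y k = br b (F (- sc (cb y) k - br a (mul (cN y) k)))"
  unfolding R_def by (simp add: normalize algebra_simps)

lemma lr_right_nilpotent: "\<exists>n. (\<lambda>x. lr x y) ^^ n = (\<lambda>_. 0)"
proof -
  define g where "g k = - sc (cb y) k - br a (mul (cN y) k)" for k
  have g_N: "k \<in> N \<Longrightarrow> g k \<in> N"
    and g_add: "k \<in> N \<Longrightarrow> l \<in> N \<Longrightarrow> g (k + l) = g k + g l"
    and g_ad_b: "k \<in> N \<Longrightarrow> g (br b k) = br b (g k)" for k l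
    unfolding g_def by (simp_all add: normalize algebra_simps)
  have R_pow: "((\<lambda>x. lr x y) ^^ n) k = ((\<lambda>k. br b (F (g k))) ^^ n) k" if "k \<in> N" for n k
  proof (induction n)
    case (Suc n)
    have "((\<lambda>k. br b (F (g k))) ^^ n) k \<in> N"
      using that by (induction n) (simp_all add: g_N F_V B_N)
    then show ?case using Suc by (simp add: lr_N_left R_factor g_def)
  qed simp
  have "((\<lambda>x. lr x y) ^^ Suc (Suc index)) x = 0" for x
  proof -
    have "((\<lambda>x. lr x y) ^^ Suc (Suc index)) x = ((\<lambda>x. lr x y) ^^ Suc index) (lr x y)"
      by (simp only: funpow_Suc_right o_apply)
    also have "\<dots> = ((\<lambda>k. br b (F (g k))) ^^ Suc index) (lr x y)"
      using R_pow lr_N by blast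
    also have "\<dots> = 0"
      by (rule nilpotent_through_F) (simp_all add: g_N g_add g_ad_b lr_N)
    finally show ?thesis .
  qed
  then show ?thesis by blast
qed

lemma lr_complete_LR_structure: "complete_LR_structure sc br lr"
  unfolding complete_LR_structure_def LR_structure_def
  using lr_bilinear lr_left_symmetric lr_right_commutative lr_commutator lr_right_nilpotent by blast

end

context two_generated_metabelian
begin

theorem complete_LR_structure_exists: "\<exists>p. complete_LR_structure sc br p"
proof (cases "\<forall>\<alpha> \<beta>. sc \<alpha> a + sc \<beta> b \<in> N \<longrightarrow> \<alpha> = 0 \<and> \<beta> = 0")
  case True
  then interpret two_generated_nondegenerate sc br Basis a b
    by unfold_locales blast
  show ?thesis using lr_complete_LR_structure by blast
next
  case False
  then obtain x0 where x0: "\<And>x. \<exists>t. x - sc t x0 \<in> N"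
    using dependent_mod_N_codim_one by blast
  show ?thesis
  proof (cases "x0 \<in> N")
    case True
    have "x \<in> N" for x
      using x0[of x] N_add[OF _ N_scale[OF True]] by (metis diff_add_cancel)
    then show ?thesis using abelian_complete N_abelian by blast
  next
    case False
    interpret codim_one_abelian_ideal sc br N x0
      by unfold_locales (use subspace_N N_abelian N_ideal False x0 in auto)
    show ?thesis using lr_complete_LR_structure by blast
  qed
qed

end

theorem theorem4p3:
  fixes sc :: "'k::field_char_0 \<Rightarrow> 'v::ab_group_add \<Rightarrow> 'v"
    and br :: "'v \<Rightarrow> 'v \<Rightarrow> 'v"
  assumes "lie_algebra sc br"
    and "finite_dim sc"
    and "two_step_solvable sc br"
    and "\<exists>a b. generated_subalgebra sc br {a, b} = UNIV"
  shows "\<exists>p. complete_LR_structure sc br p"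
proof -
  interpret lie_bracket sc br
    using assms(1) by (rule lie_algebra_imp_lie_bracket)
  obtain Basis where fd: "finite_dimensional_vector_space sc Basis"
    using finite_dim_imp_basis assms(2) by blast
  obtain a b where gen: "generated_subalgebra sc br {a, b} = UNIV"
    using assms(4) by blast
  interpret two_generated_metabelian sc br Basis a b
    by (intro two_generated_metabelian.intro two_generated_metabelian_axioms.intro
        lie_bracket_axioms fd gen) (use assms(3) in \<open>simp add: two_step_solvable_def\<close>)
  show ?thesis by (rule complete_LR_structure_exists)
qed

end
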